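(* Let $1\le i<n$ be integers with $\gcd(n,i)=d$, and let $J_n=\sum_{j=1}^{n-1}E_{j,j+1}\in M_n(\mathbb{C})$. Then $$l(\{J_n^i,(J_n^T)^{n-i}\})=l_0(\{J_n^i,(J_n^T)^{n-i}\})=\frac{2n}{d}-2.$$
   Context: $E_{i,j}$ is the matrix unit. For a finite subset $\mathcal S$ of $M_n(\mathbb{C})$: a word of length $m$ is a product $S_1\cdots S_m$ with $S_j\in\mathcal S$, the word of length $0$ being $I_n$. $\mathcal L_k(\mathcal S)$ is the span of words of length at most $k$ including $I_n$; $\mathcal L_k^0(\mathcal S)$ is the span of words of length between $1$ and $k$ (identity not automatically included). $l(\mathcal S)$ is the smallest $k$ with $\mathcal L_k(\mathcal S)=\mathcal L_{k+1}(\mathcal S)$, and $l_0(\mathcal S)$ is the smallest $k$ with $\mathcal L^0_k(\mathcal S)=\mathcal L^0_{k+1}(\mathcal S)$. *)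

theory Defs
  imports "Jordan_Normal_Form.Matrix"
begin

definition lin_comb :: "nat \<Rightarrow> (complex \<times> complex mat) list \<Rightarrow> complex mat" where
  "lin_comb n xs = foldr (\<lambda>(c, X) acc. c \<cdot>\<^sub>m X + acc) xs (0\<^sub>m n n)"

definition cspan :: "nat \<Rightarrow> complex mat set \<Rightarrow> complex mat set" where
  "cspan n T = {lin_comb n xs | xs. set (map snd xs) \<subseteq> T}"

definition words :: "nat \<Rightarrow> complex mat set \<Rightarrow> nat \<Rightarrow> complex mat set" where
  "words n S m = {foldr (*) ws (1\<^sub>m n) | ws. length ws = m \<and> set ws \<subseteq> S}"

definition L :: "nat \<Rightarrow> complex mat set \<Rightarrow> nat \<Rightarrow> complex mat set" where
  "L n S k = cspan n (\<Union>m\<in>{0..k}. words n S m)"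

definition L0 :: "nat \<Rightarrow> complex mat set \<Rightarrow> nat \<Rightarrow> complex mat set" where
  "L0 n S k = cspan n (\<Union>m\<in>{1..k}. words n S m)"

definition len :: "nat \<Rightarrow> complex mat set \<Rightarrow> nat" where
  "len n S = (LEAST k. L n S k = L n S (Suc k))"

definition len0 :: "nat \<Rightarrow> complex mat set \<Rightarrow> nat" where
  "len0 n S = (LEAST k. L0 n S k = L0 n S (Suc k))"

text \<open>J_n = sum_{j=1}^{n-1} E_{j,j+1}; with 0-based indices: entry (r,c) is 1 iff c = r+1.\<close>
definition Jmat :: "nat \<Rightarrow> complex mat" where
  "Jmat n = mat n n (\<lambda>(r, c). if c = r + 1 then 1 else 0)"

end

theory Submission
  imports Defs "HOL-Number_Theory.Cong"
begin

text \<open>Both generators are partial permutation matrices: on a column c < n exactly one of them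
  is nonzero, and either one moves c to c + (n - i) mod n.  Hence the word with letter pattern
  bs moves c along this rotation for length bs steps and is supported on the columns whose
  itinerary (which letter acts at each step) is bs.  Writing n = d m and i = d i', column c
  behaves like the point c div d of the m-cycle y \<mapsto> y + (m - i') mod m, and itineraries of
  length m - 1 already separate the points of that cycle.  So a word of length 2m - 1 vanishes
  or equals its suffix of length m - 1, and the span stabilises at length 2m - 2; a functional
  comparing two entries shows that it does not stabilise earlier.\<close>

section \<open>Partial permutation matrices\<close>

definition partial_perm_mat :: "nat \<Rightarrow> (nat \<Rightarrow> nat option) \<Rightarrow> complex mat" where
  "partial_perm_mat n f = mat n n (\<lambda>(r, c). if f c = Some r then 1 else 0)"

lemma partial_perm_mat_carrier [simp]: "partial_perm_mat n f \<in> carrier_mat n n"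
  by (simp add: partial_perm_mat_def)

lemma partial_perm_mat_index [simp]:
  "r < n \<Longrightarrow> c < n \<Longrightarrow> partial_perm_mat n f $$ (r, c) = (if f c = Some r then 1 else 0)"
  by (simp add: partial_perm_mat_def)

lemma partial_perm_mat_cong:
  "(\<And>c. c < n \<Longrightarrow> f c = g c) \<Longrightarrow> partial_perm_mat n f = partial_perm_mat n g"
  by (rule eq_matI) (auto simp: partial_perm_mat_def)

lemma one_mat_partial_perm: "1\<^sub>m n = partial_perm_mat n Some"
  by (rule eq_matI) (auto simp: partial_perm_mat_def)

lemma partial_perm_mat_None:
  "(\<And>c. c < n \<Longrightarrow> f c = None) \<Longrightarrow> partial_perm_mat n f = 0\<^sub>m n n"
  by (rule eq_matI) (auto simp: partial_perm_mat_def)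

lemma partial_perm_mat_mult:
  assumes "\<And>c r. c < n \<Longrightarrow> g c = Some r \<Longrightarrow> r < n"
  shows "partial_perm_mat n f * partial_perm_mat n g = partial_perm_mat n (\<lambda>c. Option.bind (g c) f)"
proof (rule eq_matI)
  fix r c assume "r < dim_row (partial_perm_mat n (\<lambda>c. Option.bind (g c) f))"
    and "c < dim_col (partial_perm_mat n (\<lambda>c. Option.bind (g c) f))"
  hence r: "r < n" and c: "c < n" by (simp_all add: partial_perm_mat_def)
  have "(partial_perm_mat n f * partial_perm_mat n g) $$ (r, c)
      = (\<Sum>b\<in>{0..<n}. partial_perm_mat n f $$ (r, b) * partial_perm_mat n g $$ (b, c))"
    using r c by (simp add: scalar_prod_def partial_perm_mat_def)
  also have "\<dots> = (\<Sum>b\<in>{0..<n}. if g c = Some b then (if f b = Some r then 1 else 0) else 0)"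
    using r c by (intro sum.cong) auto
  also have "\<dots> = (if Option.bind (g c) f = Some r then 1 else 0)"
    using assms[OF c] by (cases "g c") auto
  finally show "(partial_perm_mat n f * partial_perm_mat n g) $$ (r, c)
      = partial_perm_mat n (\<lambda>c. Option.bind (g c) f) $$ (r, c)"
    using r c by simp
qed (simp_all add: partial_perm_mat_def)

section \<open>Spans of matrices\<close>

definition mat_subspace :: "nat \<Rightarrow> complex mat set \<Rightarrow> bool" where
  "mat_subspace n V \<longleftrightarrow>
     0\<^sub>m n n \<in> V \<and> (\<forall>X\<in>V. \<forall>Y\<in>V. X + Y \<in> V) \<and> (\<forall>a. \<forall>X\<in>V. a \<cdot>\<^sub>m X \<in> V)"

lemma lin_comb_Nil [simp]: "lin_comb n [] = 0\<^sub>m n n"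
  by (simp add: lin_comb_def)

lemma lin_comb_Cons [simp]: "lin_comb n ((a, X) # xs) = a \<cdot>\<^sub>m X + lin_comb n xs"
  by (simp add: lin_comb_def)

lemma lin_comb_carrier [simp]: "lin_comb n xs \<in> carrier_mat n n"
  by (induction xs) (auto simp: lin_comb_def)

lemma cspan_minimal:
  assumes "T \<subseteq> V" and "mat_subspace n V"
  shows "cspan n T \<subseteq> V"
proof
  fix X assume "X \<in> cspan n T"
  then obtain xs where X: "X = lin_comb n xs" and xs: "set (map snd xs) \<subseteq> T"
    by (auto simp: cspan_def)
  from xs have "lin_comb n xs \<in> V"
    by (induction xs) (use assms in \<open>auto simp: mat_subspace_def\<close>)
  with X show "X \<in> V" by simp
qed

lemma lin_comb_append:
  "set (map snd xs) \<subseteq> carrier_mat n n \<Longrightarrow> lin_comb n (xs @ ys) = lin_comb n xs + lin_comb n ys"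
  by (induction xs) (auto simp: assoc_add_mat[of _ n n])

lemma smult_smult_mat: "a \<cdot>\<^sub>m (b \<cdot>\<^sub>m A) = (a * b :: 'a :: semigroup_mult) \<cdot>\<^sub>m A"
  by (rule eq_matI) (auto simp: mult.assoc)

lemma smult_lin_comb:
  "set (map snd xs) \<subseteq> carrier_mat n n \<Longrightarrow>
     a \<cdot>\<^sub>m lin_comb n xs = lin_comb n (map (\<lambda>(b, X). (a * b, X)) xs)"
  by (induction xs) (auto simp: add_smult_distrib_left_mat[of _ n n] smult_smult_mat)

lemma mat_subspace_cspan:
  assumes "T \<subseteq> carrier_mat n n"
  shows "mat_subspace n (cspan n T)"
  unfolding mat_subspace_def
proof (intro conjI ballI allI)
  show "0\<^sub>m n n \<in> cspan n T"
    unfolding cspan_def by (intro CollectI exI[of _ "[]"]) simp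
next
  fix X Y assume "X \<in> cspan n T" "Y \<in> cspan n T"
  then obtain xs ys where "X = lin_comb n xs" "set (map snd xs) \<subseteq> T"
    and "Y = lin_comb n ys" "set (map snd ys) \<subseteq> T"
    by (auto simp: cspan_def)
  with assms show "X + Y \<in> cspan n T"
    unfolding cspan_def by (intro CollectI exI[of _ "xs @ ys"]) (auto simp: lin_comb_append)
next
  fix a X assume "X \<in> cspan n T"
  then obtain xs where "X = lin_comb n xs" "set (map snd xs) \<subseteq> T"
    by (auto simp: cspan_def)
  with assms show "a \<cdot>\<^sub>m X \<in> cspan n T"
    unfolding cspan_def
    by (intro CollectI exI[of _ "map (\<lambda>(b, X). (a * b, X)) xs"]) (auto simp: smult_lin_comb)
qed

lemma cspan_superset:
  assumes "T \<subseteq> carrier_mat n n"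
  shows "T \<subseteq> cspan n T"
proof
  fix X assume X: "X \<in> T"
  with assms have "lin_comb n [(1, X)] = X" by (auto intro!: eq_matI)
  with X show "X \<in> cspan n T"
    unfolding cspan_def by (intro CollectI exI[of _ "[(1, X)]"]) simp
qed

lemma cspan_mono: "T \<subseteq> U \<Longrightarrow> cspan n T \<subseteq> cspan n U"
  unfolding cspan_def by blast

lemma cspan_entries_eq:
  assumes "\<And>X. X \<in> T \<Longrightarrow> X \<in> carrier_mat n n \<and> X $$ (r, c) = X $$ (r', c')"
    and "r < n" "c < n" "r' < n" "c' < n" and "X \<in> cspan n T"
  shows "X $$ (r, c) = X $$ (r', c')"
proof -
  have "cspan n T \<subseteq> {X \<in> carrier_mat n n. X $$ (r, c) = X $$ (r', c')}"
    using assms(1-5) by (intro cspan_minimal) (auto simp: mat_subspace_def)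
  with assms(6) show ?thesis by blast
qed

lemma mat_subspace_mult_preimage:
  assumes "s \<in> carrier_mat n n" and "mat_subspace n W"
  shows "mat_subspace n {X \<in> carrier_mat n n. s * X \<in> W}"
  using assms
  by (auto simp: mat_subspace_def mult_add_distrib_mat[of s n n] mult_smult_distrib[of s n n])

section \<open>The filtration by word length\<close>

lemma words_Suc: "words n S (Suc k) = {s * w | s w. s \<in> S \<and> w \<in> words n S k}"
proof (intro equalityI subsetI)
  fix X assume "X \<in> words n S (Suc k)"
  then obtain ws where "X = foldr (*) ws (1\<^sub>m n)" "length ws = Suc k" "set ws \<subseteq> S"
    by (auto simp: words_def)
  then show "X \<in> {s * w | s w. s \<in> S \<and> w \<in> words n S k}"
    by (cases ws) (auto simp: words_def)
next
  fix X assume "X \<in> {s * w | s w. s \<in> S \<and> w \<in> words n S k}"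
  then obtain s ws where "X = s * foldr (*) ws (1\<^sub>m n)" "length ws = k" "set ws \<subseteq> S" "s \<in> S"
    by (auto simp: words_def)
  then show "X \<in> words n S (Suc k)"
    unfolding words_def by (intro CollectI exI[of _ "s # ws"]) auto
qed

lemma words_carrier: "S \<subseteq> carrier_mat n n \<Longrightarrow> words n S k \<subseteq> carrier_mat n n"
proof (induction k)
  case 0 then show ?case by (auto simp: words_def)
next
  case (Suc k) then show ?case by (force simp: words_Suc intro: mult_carrier_mat)
qed

definition Lspan :: "nat \<Rightarrow> complex mat set \<Rightarrow> nat \<Rightarrow> nat \<Rightarrow> complex mat set" where
  "Lspan n S lo k = cspan n (\<Union>j\<in>{lo..k}. words n S j)"

lemma L_eq_Lspan: "L n S k = Lspan n S 0 k"
  by (simp add: L_def Lspan_def)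

lemma L0_eq_Lspan: "L0 n S k = Lspan n S 1 k"
  by (simp add: L0_def Lspan_def)

lemma mat_subspace_Lspan: "S \<subseteq> carrier_mat n n \<Longrightarrow> mat_subspace n (Lspan n S lo k)"
  unfolding Lspan_def using words_carrier by (intro mat_subspace_cspan) blast

lemma words_subset_Lspan:
  assumes "S \<subseteq> carrier_mat n n" and "lo \<le> j" and "j \<le> k"
  shows "words n S j \<subseteq> Lspan n S lo k"
  unfolding Lspan_def using words_carrier[OF assms(1)] assms(2,3)
  by (intro subset_trans[OF _ cspan_superset]) auto

lemma Lspan_mono: "k \<le> k' \<Longrightarrow> Lspan n S lo k \<subseteq> Lspan n S lo k'"
  unfolding Lspan_def by (intro cspan_mono) force

lemma mult_Lspan:
  assumes S: "S \<subseteq> carrier_mat n n" and "s \<in> S" and "X \<in> Lspan n S lo k"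
  shows "s * X \<in> Lspan n S lo (Suc k)"
proof -
  have "Lspan n S lo k \<subseteq> {X \<in> carrier_mat n n. s * X \<in> Lspan n S lo (Suc k)}"
    unfolding Lspan_def[of n S lo k]
  proof (rule cspan_minimal)
    show "(\<Union>j\<in>{lo..k}. words n S j) \<subseteq> {X \<in> carrier_mat n n. s * X \<in> Lspan n S lo (Suc k)}"
    proof (intro subsetI CollectI conjI)
      fix w assume "w \<in> (\<Union>j\<in>{lo..k}. words n S j)"
      then obtain j where j: "lo \<le> j" "j \<le> k" and w: "w \<in> words n S j" by auto
      from w show "w \<in> carrier_mat n n" using words_carrier[OF S] by blast
      from w \<open>s \<in> S\<close> have "s * w \<in> words n S (Suc j)" by (auto simp: words_Suc)
      with j show "s * w \<in> Lspan n S lo (Suc k)"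
        using words_subset_Lspan[OF S, of lo "Suc j" "Suc k"] by auto
    qed
    show "mat_subspace n {X \<in> carrier_mat n n. s * X \<in> Lspan n S lo (Suc k)}"
      using S \<open>s \<in> S\<close> by (intro mat_subspace_mult_preimage mat_subspace_Lspan) auto
  qed
  with assms(3) show ?thesis by blast
qed

lemma Lspan_Suc_eqI:
  assumes S: "S \<subseteq> carrier_mat n n" and "words n S (Suc k) \<subseteq> Lspan n S lo k"
  shows "Lspan n S lo (Suc k) = Lspan n S lo k"
proof
  show "Lspan n S lo (Suc k) \<subseteq> Lspan n S lo k"
    unfolding Lspan_def[of n S lo "Suc k"]
  proof (rule cspan_minimal)
    show "(\<Union>j\<in>{lo..Suc k}. words n S j) \<subseteq> Lspan n S lo k"
    proof (rule UN_least)
      fix j assume "j \<in> {lo..Suc k}"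
      then consider "j = Suc k" | "lo \<le> j" "j \<le> k" by fastforce
      then show "words n S j \<subseteq> Lspan n S lo k"
        by cases (use assms(2) words_subset_Lspan[OF S] in auto)
    qed
  qed (rule mat_subspace_Lspan[OF S])
qed (rule Lspan_mono, simp)

lemma Lspan_Suc_Suc_eq:
  assumes S: "S \<subseteq> carrier_mat n n" and "lo \<le> Suc k"
    and eq: "Lspan n S lo (Suc k) = Lspan n S lo k"
  shows "Lspan n S lo (Suc (Suc k)) = Lspan n S lo (Suc k)"
proof (rule Lspan_Suc_eqI[OF S], rule subsetI)
  fix w assume "w \<in> words n S (Suc (Suc k))"
  then obtain s v where w: "w = s * v" and "s \<in> S" and "v \<in> words n S (Suc k)"
    by (auto simp: words_Suc)
  with assms(2) have "v \<in> Lspan n S lo k"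
    using words_subset_Lspan[OF S, of lo "Suc k" "Suc k"] eq by blast
  with w \<open>s \<in> S\<close> show "w \<in> Lspan n S lo (Suc k)" by (simp add: mult_Lspan[OF S])
qed

lemma Least_stationary_eq:
  fixes f :: "nat \<Rightarrow> 'a"
  assumes stable: "\<And>k. f k = f (Suc k) \<Longrightarrow> f (Suc k) = f (Suc (Suc k))"
    and "0 < N" and "f (N - 1) \<noteq> f N" and "f N = f (Suc N)"
  shows "(LEAST k. f k = f (Suc k)) = N"
proof (rule Least_equality)
  fix k assume k: "f k = f (Suc k)"
  have from_k: "f (k + j) = f (Suc (k + j))" for j
    by (induction j) (use k stable in auto)
  show "N \<le> k"
  proof (rule ccontr)
    assume "\<not> N \<le> k"
    then have "N - 1 = k + (N - 1 - k)" and "N = Suc (k + (N - 1 - k))" by auto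
    with from_k[of "N - 1 - k"] assms(3) show False by metis
  qed
qed (rule assms(4))

lemma Lspan_Least_eq:
  assumes S: "S \<subseteq> carrier_mat n n" and "lo \<le> 1" and "0 < N"
    and "Lspan n S lo (N - 1) \<noteq> Lspan n S lo N" and "Lspan n S lo (Suc N) = Lspan n S lo N"
  shows "(LEAST k. Lspan n S lo k = Lspan n S lo (Suc k)) = N"
proof (rule Least_stationary_eq)
  fix k assume "Lspan n S lo k = Lspan n S lo (Suc k)"
  with Lspan_Suc_Suc_eq[OF S, of lo k] \<open>lo \<le> 1\<close>
  show "Lspan n S lo (Suc k) = Lspan n S lo (Suc (Suc k))" by simp
qed (use assms(3-5) in auto)

section \<open>Words in the two shifts\<close>

definition orbit :: "nat \<Rightarrow> nat \<Rightarrow> nat \<Rightarrow> nat \<Rightarrow> nat" where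
  "orbit n i s c = (c + s * (n - i)) mod n"

lemma orbit_0 [simp]: "c < n \<Longrightarrow> orbit n i 0 c = c"
  by (simp add: orbit_def)

lemma orbit_less: "0 < n \<Longrightarrow> orbit n i s c < n"
  by (simp add: orbit_def)

lemma orbit_Suc: "orbit n i (Suc s) c = (orbit n i s c + (n - i)) mod n"
proof -
  have "c + Suc s * (n - i) = (c + s * (n - i)) + (n - i)" by simp
  then show ?thesis unfolding orbit_def by (metis mod_add_left_eq)
qed

lemma add_complement_mod:
  fixes x n i :: nat
  assumes "x < n" and "i \<le> n"
  shows "(x + n - i) mod n = (if i \<le> x then x - i else x + n - i)"
proof (cases "i \<le> x")
  case True
  then have "x + n - i = (x - i) + n" using assms(2) by simp
  then have "(x + n - i) mod n = (x - i) mod n" by (metis mod_add_self2)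
  with True assms(1) show ?thesis by simp
qed (use assms in simp)

lemma orbit_Suc_if:
  assumes "i < n"
  shows "orbit n i (Suc s) c = (if i \<le> orbit n i s c then orbit n i s c - i else orbit n i s c + (n - i))"
  using assms orbit_less[of n i s c] by (simp add: orbit_Suc add_complement_mod)

lemma orbit_Suc_start: "orbit n i s (Suc c) = Suc (orbit n i s c) mod n"
  unfolding orbit_def by (simp add: mod_Suc_eq)

text \<open>The latest step comes first, as in a word S_1 \<dots> S_k, where S_k acts first.\<close>
primrec itinerary :: "nat \<Rightarrow> nat \<Rightarrow> nat \<Rightarrow> nat \<Rightarrow> bool list" where
  "itinerary n i 0 c = []"
| "itinerary n i (Suc s) c = (i \<le> orbit n i s c) # itinerary n i s c"

lemma length_itinerary [simp]: "length (itinerary n i k c) = k"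
  by (induction k) auto

lemma drop_itinerary: "drop a (itinerary n i (a + b) c) = itinerary n i b c"
  by (induction a) auto

lemma itinerary_eq_iff:
  "itinerary n i k c = itinerary n i k c' \<longleftrightarrow> (\<forall>s<k. i \<le> orbit n i s c \<longleftrightarrow> i \<le> orbit n i s c')"
  by (induction k) (auto simp: less_Suc_eq)

text \<open>For c < n, (c + (n - i)) mod n is c - i if i \<le> c and c + (n - i) otherwise, so
  shift_letter n i True is J^i and shift_letter n i False is (J^T)^(n-i).\<close>
definition shift_letter :: "nat \<Rightarrow> nat \<Rightarrow> bool \<Rightarrow> complex mat" where
  "shift_letter n i b =
     partial_perm_mat n (\<lambda>c. if (i \<le> c) = b then Some ((c + (n - i)) mod n) else None)"

lemma range_shift_letter_carrier: "range (shift_letter n i) \<subseteq> carrier_mat n n"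
  by (auto simp: shift_letter_def)

lemma Jmat_power: "Jmat n ^\<^sub>m k = partial_perm_mat n (\<lambda>c. if k \<le> c then Some (c - k) else None)"
proof (induction k)
  case 0
  show ?case by (simp add: Jmat_def one_mat_partial_perm)
next
  case (Suc k)
  have "Jmat n = partial_perm_mat n (\<lambda>c. if 1 \<le> c then Some (c - 1) else None)"
    by (rule eq_matI) (auto simp: Jmat_def partial_perm_mat_def)
  with Suc have "Jmat n ^\<^sub>m Suc k = partial_perm_mat n (\<lambda>c. if k \<le> c then Some (c - k) else None)
      * partial_perm_mat n (\<lambda>c. if 1 \<le> c then Some (c - 1) else None)"
    by simp
  also have "\<dots> = partial_perm_mat n (\<lambda>c. Option.bind (if 1 \<le> c then Some (c - 1) else None)
      (\<lambda>c. if k \<le> c then Some (c - k) else None))"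
    by (rule partial_perm_mat_mult) (auto split: if_splits)
  also have "\<dots> = partial_perm_mat n (\<lambda>c. if Suc k \<le> c then Some (c - Suc k) else None)"
    by (rule partial_perm_mat_cong) auto
  finally show ?case .
qed

lemma transpose_Jmat_power:
  "transpose_mat (Jmat n) ^\<^sub>m k = partial_perm_mat n (\<lambda>c. if c + k < n then Some (c + k) else None)"
proof (induction k)
  case 0
  show ?case by (simp add: Jmat_def one_mat_partial_perm) (rule partial_perm_mat_cong, simp)
next
  case (Suc k)
  have "transpose_mat (Jmat n) = partial_perm_mat n (\<lambda>c. if c + 1 < n then Some (c + 1) else None)"
    by (rule eq_matI) (auto simp: Jmat_def partial_perm_mat_def)
  with Suc have "transpose_mat (Jmat n) ^\<^sub>m Suc k
      = partial_perm_mat n (\<lambda>c. if c + k < n then Some (c + k) else None)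
      * partial_perm_mat n (\<lambda>c. if c + 1 < n then Some (c + 1) else None)"
    by simp
  also have "\<dots> = partial_perm_mat n (\<lambda>c. Option.bind (if c + 1 < n then Some (c + 1) else None)
      (\<lambda>c. if c + k < n then Some (c + k) else None))"
    by (rule partial_perm_mat_mult) (auto split: if_splits)
  also have "\<dots> = partial_perm_mat n (\<lambda>c. if c + Suc k < n then Some (c + Suc k) else None)"
    by (rule partial_perm_mat_cong) auto
  finally show ?case .
qed

lemma shift_letter_True: "i < n \<Longrightarrow> shift_letter n i True = Jmat n ^\<^sub>m i"
  unfolding shift_letter_def Jmat_power by (rule partial_perm_mat_cong) (simp add: add_complement_mod)

lemma shift_letter_False: "i < n \<Longrightarrow> shift_letter n i False = transpose_mat (Jmat n) ^\<^sub>m (n - i)"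
  unfolding shift_letter_def transpose_Jmat_power by (rule partial_perm_mat_cong) auto

definition itinerary_mat :: "nat \<Rightarrow> nat \<Rightarrow> bool list \<Rightarrow> complex mat" where
  "itinerary_mat n i bs = partial_perm_mat n
     (\<lambda>c. if itinerary n i (length bs) c = bs then Some (orbit n i (length bs) c) else None)"

lemma itinerary_mat_index:
  "r < n \<Longrightarrow> c < n \<Longrightarrow> itinerary_mat n i bs $$ (r, c) =
     (if itinerary n i (length bs) c = bs \<and> orbit n i (length bs) c = r then 1 else 0)"
  by (simp add: itinerary_mat_def)

lemma foldr_shift_letter: "foldr (*) (map (shift_letter n i) bs) (1\<^sub>m n) = itinerary_mat n i bs"
proof (induction bs)
  case Nil
  show ?case
    unfolding itinerary_mat_def by (simp add: one_mat_partial_perm) (rule partial_perm_mat_cong, simp)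
next
  case (Cons b bs)
  let ?G = "\<lambda>c. if itinerary n i (length bs) c = bs then Some (orbit n i (length bs) c) else None"
  have "shift_letter n i b * itinerary_mat n i bs = partial_perm_mat n (\<lambda>c. Option.bind (?G c)
      (\<lambda>c. if (i \<le> c) = b then Some ((c + (n - i)) mod n) else None))"
    unfolding shift_letter_def itinerary_mat_def
    by (rule partial_perm_mat_mult) (auto simp: orbit_less split: if_splits)
  also have "\<dots> = itinerary_mat n i (b # bs)"
    unfolding itinerary_mat_def by (rule partial_perm_mat_cong) (simp add: orbit_Suc)
  finally have "shift_letter n i b * itinerary_mat n i bs = itinerary_mat n i (b # bs)" .
  with Cons show ?case by simp
qed

lemma words_shift_letters:
  "words n (range (shift_letter n i)) k = itinerary_mat n i ` {bs. length bs = k}"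
proof -
  have "words n (range (shift_letter n i)) k
      = {foldr (*) (map (shift_letter n i) bs) (1\<^sub>m n) | bs. length bs = k}"
  proof (intro equalityI subsetI)
    fix X assume "X \<in> words n (range (shift_letter n i)) k"
    then obtain ws where X: "X = foldr (*) ws (1\<^sub>m n)" "length ws = k"
      and "set ws \<subseteq> range (shift_letter n i)"
      by (auto simp: words_def)
    then obtain bs where "ws = map (shift_letter n i) bs"
      using ex_map_conv[of ws "shift_letter n i"] by blast
    with X show "X \<in> {foldr (*) (map (shift_letter n i) bs) (1\<^sub>m n) | bs. length bs = k}"
      by auto
  next
    fix X assume "X \<in> {foldr (*) (map (shift_letter n i) bs) (1\<^sub>m n) | bs. length bs = k}"
    then obtain bs where "X = foldr (*) (map (shift_letter n i) bs) (1\<^sub>m n)" "length bs = k"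
      by blast
    then show "X \<in> words n (range (shift_letter n i)) k"
      unfolding words_def by (intro CollectI exI[of _ "map (shift_letter n i) bs"]) auto
  qed
  then show ?thesis by (simp add: foldr_shift_letter setcompr_eq_image)
qed

section \<open>The coprime cycle\<close>

lemma orbit_eq_iff_cong:
  assumes "coprime m ip" and "ip < m"
  shows "orbit m ip s y = orbit m ip s' y \<longleftrightarrow> [s = s'] (mod m)"
proof -
  have "coprime (m - ip) m"
    using assms gcd_diff2_nat[of ip m] by (simp add: coprime_iff_gcd_eq_1 gcd.commute)
  then show ?thesis
    unfolding orbit_def cong_def[symmetric] by (simp add: cong_add_lcancel_nat cong_mult_rcancel_nat)
qed

text \<open>Two distinct points of the m-cycle are separated by their itineraries within m - 1 steps:
  otherwise the orbit of the lower point would stay y' - y below that of the upper one and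
  could not visit all m residues.\<close>
lemma itinerary_less_neq:
  assumes cop: "coprime m ip" and ip: "ip < m" and "y < y'" and "y' < m"
  shows "itinerary m ip (m - 1) y \<noteq> itinerary m ip (m - 1) y'"
proof
  assume "itinerary m ip (m - 1) y = itinerary m ip (m - 1) y'"
  then have same_type: "(ip \<le> orbit m ip s y) = (ip \<le> orbit m ip s y')" if "s < m - 1" for s
    using that by (simp add: itinerary_eq_iff)
  have shifted: "orbit m ip s y' = orbit m ip s y + (y' - y)" if "s \<le> m - 1" for s
    using that
  proof (induction s)
    case 0
    with assms show ?case by simp
  next
    case (Suc s)
    then have "orbit m ip s y' = orbit m ip s y + (y' - y)" and "s < m - 1" by auto
    moreover have "orbit m ip (Suc s) y' < m" using orbit_less ip by simp
    ultimately show ?case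
      using same_type[of s] orbit_Suc_if[OF ip, of s y] orbit_Suc_if[OF ip, of s y']
      by (auto split: if_splits)
  qed
  have "(\<lambda>s. orbit m ip s y) ` {..<m} \<subseteq> {..<m - (y' - y)}"
  proof (rule image_subsetI)
    fix s assume "s \<in> {..<m}"
    with shifted[of s] orbit_less[of m ip s y'] ip show "orbit m ip s y \<in> {..<m - (y' - y)}"
      by auto
  qed
  moreover have "inj_on (\<lambda>s. orbit m ip s y) {..<m}"
    by (rule inj_onI) (auto simp: orbit_eq_iff_cong[OF cop ip] cong_less_imp_eq_nat)
  ultimately have "card {..<m} \<le> card {..<m - (y' - y)}"
    by (intro card_inj_on_le) auto
  with \<open>y < y'\<close> \<open>y' < m\<close> show False by simp
qed

lemma itinerary_inj:
  assumes "coprime m ip" and "ip < m" and "y < m" and "y' < m"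
    and "itinerary m ip (m - 1) y = itinerary m ip (m - 1) y'"
  shows "y = y'"
  using itinerary_less_neq[OF assms(1,2)] assms(3-5) by (metis linorder_neqE_nat)

lemma orbit_complement_eq_0_iff:
  assumes "coprime m ip" and "ip < m" and "s < m"
  shows "orbit m ip s (m - ip) = 0 \<longleftrightarrow> s = m - 1"
proof -
  have "m - ip + (m - 1) * (m - ip) = m * (m - ip)"
    using assms(2) by (cases m) simp_all
  then have "orbit m ip (m - 1) (m - ip) = 0" by (simp add: orbit_def)
  then have "orbit m ip s (m - ip) = 0 \<longleftrightarrow> orbit m ip s (m - ip) = orbit m ip (m - 1) (m - ip)"
    by simp
  also have "\<dots> \<longleftrightarrow> [s = m - 1] (mod m)" by (rule orbit_eq_iff_cong[OF assms(1,2)])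
  also have "\<dots> \<longleftrightarrow> s = m - 1" using assms(3) by (auto intro: cong_less_imp_eq_nat)
  finally show ?thesis .
qed

lemma orbit_complement_neq:
  assumes "coprime m ip" and "ip < m" and "s < m - 2"
  shows "orbit m ip s (m - ip) \<noteq> ip"
proof
  assume "orbit m ip s (m - ip) = ip"
  then have "orbit m ip (Suc s) (m - ip) = 0" using assms(2) by (simp add: orbit_Suc)
  with orbit_complement_eq_0_iff[OF assms(1,2)] assms(3) show False by simp
qed

text \<open>The neighbours m - ip - 1 and m - ip of the m-cycle are not told apart during the
  first m - 2 steps: the orbit of the upper one avoids both 0 and ip there.\<close>
lemma itinerary_complement_agree:
  assumes cop: "coprime m ip" and "0 < ip" and ip: "ip < m"
  shows "itinerary m ip (m - 2) (m - ip - 1) = itinerary m ip (m - 2) (m - ip)"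
  unfolding itinerary_eq_iff
proof (intro allI impI)
  fix s assume s: "s < m - 2"
  have "m - ip = Suc (m - ip - 1)" using ip by simp
  then have "orbit m ip s (m - ip) = Suc (orbit m ip s (m - ip - 1)) mod m"
    by (metis orbit_Suc_start)
  moreover have "orbit m ip s (m - ip) \<noteq> 0"
    using orbit_complement_eq_0_iff[OF cop ip] s by simp
  moreover have "orbit m ip s (m - ip - 1) < m" using orbit_less ip by simp
  ultimately have "orbit m ip s (m - ip) = Suc (orbit m ip s (m - ip - 1))"
    by (cases "Suc (orbit m ip s (m - ip - 1)) = m") auto
  with orbit_complement_neq[OF cop ip s]
  show "ip \<le> orbit m ip s (m - ip - 1) \<longleftrightarrow> ip \<le> orbit m ip s (m - ip)"
    by auto
qed

section \<open>Scaling by the gcd\<close>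

locale coprime_scaling =
  fixes n i d m ip :: nat
  assumes n_eq: "n = d * m" and i_eq: "i = d * ip" and d_pos: "0 < d"
    and ip_pos: "0 < ip" and ip_less: "ip < m" and coprime: "coprime m ip"
begin

lemma m_ge_2: "2 \<le> m"
  using ip_pos ip_less by simp

lemma n_pos: "0 < n"
  using n_eq d_pos ip_less by simp

lemma block_less: "c < n \<Longrightarrow> c div d < m"
  using n_eq d_pos by (simp add: less_mult_imp_div_less mult.commute)

lemma orbit_scaled:
  assumes "c < n"
  shows "orbit n i s c = d * orbit m ip s (c div d) + c mod d"
proof -
  have n_minus_i: "n - i = d * (m - ip)"
    using n_eq i_eq by (simp add: diff_mult_distrib2)
  have "c + s * (n - i) = c mod d + d * (c div d + s * (m - ip))"
    by (simp add: n_minus_i algebra_simps)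
  then have "(c + s * (n - i)) div d = c div d + s * (m - ip)"
    and "(c + s * (n - i)) mod d = c mod d"
    using d_pos by simp_all
  moreover have "orbit n i s c = d * ((c + s * (n - i)) div d mod m) + (c + s * (n - i)) mod d"
    unfolding orbit_def n_eq by (rule mod_mult2_eq)
  ultimately show ?thesis by (simp add: orbit_def)
qed

lemma type_scaled:
  assumes "c < n"
  shows "i \<le> orbit n i s c \<longleftrightarrow> ip \<le> orbit m ip s (c div d)"
proof -
  have "orbit n i s c div d = orbit m ip s (c div d)"
    using orbit_scaled[OF assms] d_pos by simp
  moreover have "ip \<le> orbit n i s c div d \<longleftrightarrow> ip * d \<le> orbit n i s c"
    using d_pos by (rule less_eq_div_iff_mult_less_eq)
  ultimately show ?thesis by (simp add: i_eq mult.commute)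
qed

lemma itinerary_scaled: "c < n \<Longrightarrow> itinerary n i k c = itinerary m ip k (c div d)"
  by (induction k) (simp_all add: type_scaled)

lemma orbit_scaled_eq_iff: "c < n \<Longrightarrow> orbit n i s c = orbit n i s' c \<longleftrightarrow> [s = s'] (mod m)"
  using d_pos by (simp add: orbit_scaled orbit_eq_iff_cong[OF coprime ip_less])

lemma itinerary_determines_block:
  assumes "c < n" and "c' < n" and "itinerary n i (m - 1) c = itinerary n i (m - 1) c'"
  shows "c div d = c' div d"
  using assms itinerary_inj[OF coprime ip_less block_less block_less]
  by (simp add: itinerary_scaled)

text \<open>A word of length 2m - 1 that is nonzero on some column c0 is nonzero exactly on the
  block of c0, as is its suffix of length m - 1, and the two act alike since the rotation
  has period m.\<close>
lemma itinerary_mat_long: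
  assumes len: "length bs = 2 * m - 1"
  shows "itinerary_mat n i bs = 0\<^sub>m n n \<or> itinerary_mat n i bs = itinerary_mat n i (drop m bs)"
proof (cases "\<exists>c0<n. itinerary n i (2 * m - 1) c0 = bs")
  case False
  then have "itinerary_mat n i bs = 0\<^sub>m n n"
    unfolding itinerary_mat_def by (rule_tac partial_perm_mat_None) (use len in auto)
  then show ?thesis ..
next
  case True
  then obtain c0 where c0: "c0 < n" "itinerary n i (2 * m - 1) c0 = bs" by blast
  have split: "2 * m - 1 = m + (m - 1)" using m_ge_2 by simp
  have suffix: "drop m (itinerary n i (2 * m - 1) c) = itinerary n i (m - 1) c" for c
    unfolding split by (rule drop_itinerary)
  have "itinerary_mat n i bs = itinerary_mat n i (drop m bs)"
    unfolding itinerary_mat_def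
  proof (rule partial_perm_mat_cong)
    fix c assume c: "c < n"
    have "itinerary n i (2 * m - 1) c = bs \<longleftrightarrow> itinerary n i (m - 1) c = drop m bs"
    proof
      assume "itinerary n i (m - 1) c = drop m bs"
      also have "drop m bs = itinerary n i (m - 1) c0"
        using suffix[of c0] unfolding c0(2) .
      finally have "c div d = c0 div d" by (rule itinerary_determines_block[OF c c0(1)])
      with c c0 show "itinerary n i (2 * m - 1) c = bs" by (simp add: itinerary_scaled)
    qed (use suffix in auto)
    moreover have "orbit n i (2 * m - 1) c = orbit n i (m - 1) c"
      using c split by (simp add: orbit_scaled_eq_iff cong_def)
    ultimately show "(if itinerary n i (length bs) c = bs then Some (orbit n i (length bs) c) else None)
      = (if itinerary n i (length (drop m bs)) c = drop m bs
         then Some (orbit n i (length (drop m bs)) c) else None)"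
      using len by simp
  qed
  then show ?thesis ..
qed

lemma Lspan_stable:
  assumes "lo \<le> 1"
  shows "Lspan n (range (shift_letter n i)) lo (Suc (2 * m - 2))
    = Lspan n (range (shift_letter n i)) lo (2 * m - 2)"
proof (rule Lspan_Suc_eqI[OF range_shift_letter_carrier], rule subsetI)
  fix X assume "X \<in> words n (range (shift_letter n i)) (Suc (2 * m - 2))"
  then obtain bs where X: "X = itinerary_mat n i bs" and len: "length bs = 2 * m - 1"
    using m_ge_2 by (auto simp: words_shift_letters)
  from itinerary_mat_long[OF len] X
  consider "X = 0\<^sub>m n n" | "X = itinerary_mat n i (drop m bs)" by blast
  then show "X \<in> Lspan n (range (shift_letter n i)) lo (2 * m - 2)"
  proof cases
    case 1
    then show ?thesis
      using mat_subspace_Lspan[OF range_shift_letter_carrier] by (simp add: mat_subspace_def)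
  next
    case 2
    with len have "X \<in> words n (range (shift_letter n i)) (m - 1)"
      by (auto simp: words_shift_letters)
    moreover have "words n (range (shift_letter n i)) (m - 1)
        \<subseteq> Lspan n (range (shift_letter n i)) lo (2 * m - 2)"
      using assms m_ge_2 by (intro words_subset_Lspan[OF range_shift_letter_carrier]) auto
    ultimately show ?thesis by blast
  qed
qed

text \<open>The columns c1 = d (m - ip - 1) and c2 = d (m - ip) share their itineraries for m - 2
  steps and part at step m - 2.  The functional X \<mapsto> X(p1, c1) - X(p2, c2), with p1, p2 their
  positions after m - 2 steps, kills every word of length at most 2m - 3 (only words of length
  m - 2 can reach p1 from c1 or p2 from c2), but not the word of length 2m - 2 following c2.\<close>
lemma Lspan_grows:
  assumes "lo \<le> 1"
  shows "Lspan n (range (shift_letter n i)) lo (2 * m - 2 - 1)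
    \<noteq> Lspan n (range (shift_letter n i)) lo (2 * m - 2)"
proof
  assume eq: "Lspan n (range (shift_letter n i)) lo (2 * m - 2 - 1)
    = Lspan n (range (shift_letter n i)) lo (2 * m - 2)"
  define c1 c2 where "c1 = d * (m - ip - 1)" and "c2 = d * (m - ip)"
  have c: "c1 < n" "c2 < n"
    using n_eq d_pos ip_pos ip_less by (auto simp: c1_def c2_def)
  have blocks: "c1 div d = m - ip - 1" "c2 div d = m - ip"
    using d_pos by (auto simp: c1_def c2_def)
  define p1 p2 where "p1 = orbit n i (m - 2) c1" and "p2 = orbit n i (m - 2) c2"
  have p: "p1 < n" "p2 < n"
    using orbit_less n_pos by (auto simp: p1_def p2_def)
  have agree: "itinerary n i (m - 2) c1 = itinerary n i (m - 2) c2"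
    using c blocks itinerary_complement_agree[OF coprime ip_pos ip_less]
    by (simp add: itinerary_scaled)
  have only_at: "j = m - 2" if "j \<le> 2 * m - 3" "c < n" "orbit n i j c = orbit n i (m - 2) c"
    for j c
  proof -
    have j_mod: "j mod m = m - 2"
      using that(2,3) m_ge_2 by (simp add: orbit_scaled_eq_iff cong_def)
    show ?thesis
    proof (cases "j < m")
      case False
      then have "j mod m = j - m" using that(1) m_ge_2 by (simp add: le_mod_geq)
      with j_mod that(1) False m_ge_2 show ?thesis by arith
    qed (use j_mod in simp)
  qed
  have entries: "X $$ (p1, c1) = X $$ (p2, c2)"
    if "X \<in> Lspan n (range (shift_letter n i)) lo (2 * m - 2 - 1)" for X
    using p(1) c(1) p(2) c(2) that unfolding Lspan_def
  proof (rule cspan_entries_eq[rotated])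
    fix Y assume "Y \<in> (\<Union>j\<in>{lo..2 * m - 2 - 1}. words n (range (shift_letter n i)) j)"
    then obtain bs where Y: "Y = itinerary_mat n i bs" and len: "length bs \<le> 2 * m - 3"
      by (auto simp: words_shift_letters)
    have "Y $$ (p1, c1) = Y $$ (p2, c2)"
    proof (cases "length bs = m - 2")
      case True
      with Y agree p c show ?thesis by (simp add: itinerary_mat_index p1_def p2_def)
    next
      case False
      then have "orbit n i (length bs) c1 \<noteq> p1" "orbit n i (length bs) c2 \<noteq> p2"
        using only_at[OF len] c by (auto simp: p1_def p2_def)
      with Y p c show ?thesis by (simp add: itinerary_mat_index)
    qed
    with Y show "Y \<in> carrier_mat n n \<and> Y $$ (p1, c1) = Y $$ (p2, c2)"
      by (simp add: itinerary_mat_def)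
  qed
  define W where "W = itinerary_mat n i (itinerary n i (2 * m - 2) c2)"
  have "W \<in> words n (range (shift_letter n i)) (2 * m - 2)"
    by (auto simp: W_def words_shift_letters)
  moreover have "words n (range (shift_letter n i)) (2 * m - 2)
      \<subseteq> Lspan n (range (shift_letter n i)) lo (2 * m - 2)"
    using assms m_ge_2 by (intro words_subset_Lspan[OF range_shift_letter_carrier]) auto
  ultimately have "W \<in> Lspan n (range (shift_letter n i)) lo (2 * m - 2 - 1)"
    unfolding eq by blast
  then have W_entries: "W $$ (p1, c1) = W $$ (p2, c2)" by (rule entries)
  have halves: "2 * m - 2 = (m - 1) + (m - 1)" using m_ge_2 by simp
  have "itinerary n i (2 * m - 2) c1 \<noteq> itinerary n i (2 * m - 2) c2"
  proof
    assume "itinerary n i (2 * m - 2) c1 = itinerary n i (2 * m - 2) c2"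
    then have "itinerary n i (m - 1) c1 = itinerary n i (m - 1) c2"
      using drop_itinerary[of "m - 1" n i "m - 1"] unfolding halves by metis
    then have "c1 div d = c2 div d" by (rule itinerary_determines_block[OF c])
    with blocks ip_less show False by simp
  qed
  then have "W $$ (p1, c1) = 0" using p c by (simp add: W_def itinerary_mat_index)
  moreover have "[2 * m - 2 = m - 2] (mod m)"
  proof -
    have "2 * m - 2 = m + (m - 2)" using m_ge_2 by simp
    then show ?thesis unfolding cong_def by (metis mod_add_self1)
  qed
  then have "orbit n i (2 * m - 2) c2 = p2"
    using c(2) by (simp add: p2_def orbit_scaled_eq_iff)
  then have "W $$ (p2, c2) = 1" using p c by (simp add: W_def itinerary_mat_index)
  ultimately show False using W_entries by simp
qed

lemma Lspan_length:
  assumes "lo \<le> 1"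
  shows "(LEAST k. Lspan n (range (shift_letter n i)) lo k
      = Lspan n (range (shift_letter n i)) lo (Suc k)) = 2 * m - 2"
  using assms m_ge_2 Lspan_grows Lspan_stable
  by (intro Lspan_Least_eq[OF range_shift_letter_carrier]) auto

end

theorem mainTheorem9:
  fixes n i d :: nat
  assumes "1 \<le> i" and "i < n" and "d = gcd n i"
  shows "len n {Jmat n ^\<^sub>m i, transpose_mat (Jmat n) ^\<^sub>m (n - i)} = 2 * n div d - 2 \<and>
         len0 n {Jmat n ^\<^sub>m i, transpose_mat (Jmat n) ^\<^sub>m (n - i)} = 2 * n div d - 2"
proof -
  have "d dvd n" "d dvd i" "0 < d" using assms by auto
  moreover from this have "i div d < n div d"
    using assms(2) by (auto elim!: dvdE)
  ultimately interpret coprime_scaling n i d "n div d" "i div d"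
    using assms div_gcd_coprime[of n i] by unfold_locales (auto simp: div_greater_zero_iff)
  have letters: "{Jmat n ^\<^sub>m i, transpose_mat (Jmat n) ^\<^sub>m (n - i)} = range (shift_letter n i)"
    using assms(2) by (auto simp: shift_letter_True shift_letter_False UNIV_bool)
  have "2 * n div d - 2 = 2 * (n div d) - 2"
    using \<open>d dvd n\<close> by (auto elim: dvdE)
  then show ?thesis
    unfolding letters len_def len0_def L_eq_Lspan L0_eq_Lspan by (simp add: Lspan_length)
qed

end
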